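(* Every shift space $X\subseteq\mathscr{A}^\infty$ with the $\bar d$-shadowing property is $\bar d$-approachable.
   Context: $\mathscr{A}$ finite; shift spaces are nonempty closed shift-invariant subsets of $\mathscr{A}^{\mathbb N_0}$; $\mathcal L(X)$, $\mathcal L_n(X)$ denote the words (of length $n$) appearing in $X$. $\bar d(x,y)=\limsup_{n\to\infty}\frac1n|\{0\le j<n:x_j\ne y_j\}|$; $\bar d^H(A,B)=\max\{\sup_{a\in A}\inf_{b\in B}\bar d(a,b),\sup_{b\in B}\inf_{a\in A}\bar d(a,b)\}$. $X$ has the $\bar d$-shadowing property if for every $\varepsilon>0$ there is $N$ such that for every sequence $(w^{(j)})_{j\ge1}$ in $\mathcal L(X)$ with $|w^{(j)}|\ge N$ there is $x'\in X$ with $\bar d(w^{(1)}w^{(2)}\cdots,x')<\varepsilon$. The $n$-th Markov approximation $X^M_n$ is the set of $x\in\mathscr{A}^{\mathbb N_0}$ all of whose subwords of length $n+1$ lie in $\mathcal L_{n+1}(X)$. $X$ is $\bar d$-approachable if $\bar d^H(X^M_n,X)\to0$ as $n\to\infty$. *)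

theory Defs
  imports "HOL-Analysis.Analysis" "HOL-Library.Extended_Real"
begin

type_synonym 'a seq = "nat \<Rightarrow> 'a"

definition shift :: "'a seq \<Rightarrow> 'a seq" where
  "shift x = (\<lambda>n. x (Suc n))"

definition subword :: "'a seq \<Rightarrow> nat \<Rightarrow> nat \<Rightarrow> 'a list" where
  "subword x i n = map x [i..<i+n]"

text \<open>Closedness in the product topology of the discrete alphabet:
  x is in the closure of X iff every finite prefix of x is a prefix of some point of X.\<close>
definition seq_closed :: "'a seq set \<Rightarrow> bool" where
  "seq_closed X \<longleftrightarrow> (\<forall>x. (\<forall>n. \<exists>y\<in>X. \<forall>i<n. y i = x i) \<longrightarrow> x \<in> X)"

definition shift_space :: "('a::finite) seq set \<Rightarrow> bool" where
  "shift_space X \<longleftrightarrow> X \<noteq> {} \<and> seq_closed X \<and> shift ` X \<subseteq> X"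

definition lang :: "'a seq set \<Rightarrow> 'a list set" where
  "lang X = {w. \<exists>x\<in>X. \<exists>i. w = subword x i (length w)}"

definition lang_n :: "'a seq set \<Rightarrow> nat \<Rightarrow> 'a list set" where
  "lang_n X n = {w \<in> lang X. length w = n}"

definition dbar :: "'a seq \<Rightarrow> 'a seq \<Rightarrow> ereal" where
  "dbar x y = limsup (\<lambda>n. ereal (real (card {j. j < n \<and> x j \<noteq> y j}) / real n))"

definition dbar_H :: "'a seq set \<Rightarrow> 'a seq set \<Rightarrow> ereal" where
  "dbar_H A B = max (SUP a\<in>A. INF b\<in>B. dbar a b) (SUP b\<in>B. INF a\<in>A. dbar a b)"

text \<open>Infinite concatenation w 0 w 1 w 2 ... of nonempty words.\<close>
definition cat_start :: "(nat \<Rightarrow> 'a list) \<Rightarrow> nat \<Rightarrow> nat" where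
  "cat_start w k = (\<Sum>j<k. length (w j))"

definition inf_concat :: "(nat \<Rightarrow> 'a list) \<Rightarrow> 'a seq" where
  "inf_concat w p = (let k = (LEAST k. p < cat_start w (Suc k)) in w k ! (p - cat_start w k))"

definition dbar_shadowing :: "'a seq set \<Rightarrow> bool" where
  "dbar_shadowing X \<longleftrightarrow> (\<forall>\<epsilon>>0. \<exists>N>0. \<forall>w :: nat \<Rightarrow> 'a list.
      (\<forall>j. w j \<in> lang X \<and> length (w j) \<ge> N) \<longrightarrow>
      (\<exists>x'\<in>X. dbar (inf_concat w) x' < ereal \<epsilon>))"

definition markov_approx :: "'a seq set \<Rightarrow> nat \<Rightarrow> 'a seq set" where
  "markov_approx X n = {x. \<forall>i. subword x i (n+1) \<in> lang_n X (n+1)}"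

definition dbar_approachable :: "'a seq set \<Rightarrow> bool" where
  "dbar_approachable X \<longleftrightarrow> (\<lambda>n. dbar_H (markov_approx X n) X) \<longlonglongrightarrow> 0"

end

theory Submission
  imports Defs
begin

text \<open>Cutting a point of the n-th Markov approximation into consecutive blocks of length
  n + 1 exhibits it as a concatenation of words of the language of X, so d-bar-shadowing puts
  a point of X within \<epsilon> of it once n is large. Conversely X is contained in each of its
  Markov approximations, so both halves of the Hausdorff distance are at most \<epsilon>.\<close>

lemma dbar_nonneg: "0 \<le> dbar x y"
  unfolding dbar_def by (rule le_Limsup) auto

lemma dbar_refl: "dbar x x = 0"
  unfolding dbar_def by (simp add: Limsup_const)

lemma dbar_H_nonneg:
  assumes "B \<noteq> {}"
  shows "0 \<le> dbar_H A B"
proof -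
  obtain b where "b \<in> B" using assms by blast
  have "0 \<le> (INF a\<in>A. dbar a b)"
    by (rule INF_greatest) (rule dbar_nonneg)
  also have "\<dots> \<le> (SUP b\<in>B. INF a\<in>A. dbar a b)"
    using \<open>b \<in> B\<close> by (rule SUP_upper)
  finally show ?thesis unfolding dbar_H_def by (simp add: le_max_iff_disj)
qed

lemma dbar_H_le_of_subset:
  assumes "B \<subseteq> A" and "0 \<le> e" and close: "\<And>a. a \<in> A \<Longrightarrow> \<exists>b\<in>B. dbar a b \<le> e"
  shows "dbar_H A B \<le> e"
proof -
  have "(SUP a\<in>A. INF b\<in>B. dbar a b) \<le> e"
  proof (rule SUP_least)
    fix a assume "a \<in> A"
    then obtain b where "b \<in> B" "dbar a b \<le> e" using close by blast
    then show "(INF b\<in>B. dbar a b) \<le> e" by (meson INF_lower order.trans)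
  qed
  moreover have "(SUP b\<in>B. INF a\<in>A. dbar a b) \<le> e"
  proof (rule SUP_least)
    fix b assume "b \<in> B"
    then have "(INF a\<in>A. dbar a b) \<le> dbar b b" using assms(1) by (blast intro: INF_lower)
    then show "(INF a\<in>A. dbar a b) \<le> e" using assms(2) by (simp add: dbar_refl)
  qed
  ultimately show ?thesis unfolding dbar_H_def by simp
qed

lemma subword_in_lang: "x \<in> X \<Longrightarrow> subword x i n \<in> lang X"
  unfolding lang_def subword_def by auto

lemma subset_markov_approx: "X \<subseteq> markov_approx X n"
  unfolding markov_approx_def lang_n_def
proof (intro subsetI CollectI allI conjI)
  fix x i assume "x \<in> X"
  then show "subword x i (n + 1) \<in> lang X" by (rule subword_in_lang)
qed (simp add: subword_def)

lemma cat_start_blocks: "cat_start (\<lambda>j. subword x (j * m) m) k = k * m"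
  unfolding cat_start_def subword_def by simp

lemma inf_concat_blocks:
  assumes "m > 0"
  shows "inf_concat (\<lambda>j. subword x (j * m) m) = x"
proof
  fix p
  let ?w = "\<lambda>j. subword x (j * m) m"
  have block: "(LEAST k. p < cat_start ?w (Suc k)) = p div m"
  proof (rule Least_equality)
    show "p < cat_start ?w (Suc (p div m))"
      unfolding cat_start_blocks using assms
      by (metis add.commute div_mult_mod_eq mod_less_divisor mult_Suc nat_add_left_cancel_less)
  next
    fix k assume "p < cat_start ?w (Suc k)"
    then have "p div m < Suc k"
      using assms by (simp add: cat_start_blocks div_less_iff_less_mult)
    then show "p div m \<le> k" by simp
  qed
  have "p - p div m * m = p mod m" by (simp add: minus_div_mult_eq_mod)
  moreover have "p mod m < m" using assms by simp
  ultimately show "inf_concat ?w p = x p"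
    unfolding inf_concat_def Let_def block unfolding cat_start_blocks by (simp add: subword_def)
qed

lemma markov_approx_shadowed:
  assumes "\<And>w :: nat \<Rightarrow> 'a list. (\<forall>j. w j \<in> lang X \<and> length (w j) \<ge> N) \<Longrightarrow>
      \<exists>x'\<in>X. dbar (inf_concat w) x' < ereal e"
    and "n \<ge> N" and "a \<in> markov_approx X n"
  shows "\<exists>x'\<in>X. dbar a x' < ereal e"
proof -
  let ?w = "\<lambda>j. subword a (j * (n + 1)) (n + 1)"
  have "\<forall>j. ?w j \<in> lang X \<and> length (?w j) \<ge> N"
    using assms(2,3) unfolding markov_approx_def lang_n_def by (auto simp: subword_def)
  from assms(1)[OF this] obtain x' where "x' \<in> X" "dbar (inf_concat ?w) x' < ereal e" by blast
  then show ?thesis using inf_concat_blocks[of "n + 1" a] by auto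
qed

lemma ereal_tendsto_zeroI:
  fixes f :: "nat \<Rightarrow> ereal"
  assumes "\<And>n. 0 \<le> f n" and "\<And>e. e > 0 \<Longrightarrow> eventually (\<lambda>n. f n \<le> ereal e) sequentially"
  shows "f \<longlonglongrightarrow> 0"
proof (rule order_tendstoI)
  fix a :: ereal assume "a < 0"
  then show "eventually (\<lambda>n. a < f n) sequentially"
    using assms(1) by (intro always_eventually allI) (rule order.strict_trans2)
next
  fix a :: ereal assume "0 < a"
  then obtain e where "e > 0" "ereal e < a"
  proof (cases a)
    case (real r)
    then show ?thesis using \<open>0 < a\<close> that[of "r / 2"] by simp
  qed (use \<open>0 < a\<close> that[of 1] in auto)
  from assms(2)[OF \<open>e > 0\<close>] show "eventually (\<lambda>n. f n < a) sequentially"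
    by (rule eventually_mono) (use \<open>ereal e < a\<close> in auto)
qed

theorem mainTheorem7:
  fixes X :: "('a::finite) seq set"
  assumes "shift_space X" and "dbar_shadowing X"
  shows "dbar_approachable X"
  unfolding dbar_approachable_def
proof (rule ereal_tendsto_zeroI)
  show "0 \<le> dbar_H (markov_approx X n) X" for n
    using assms(1) unfolding shift_space_def by (simp add: dbar_H_nonneg)
next
  fix e :: real assume "e > 0"
  then obtain N where shadow: "\<And>w :: nat \<Rightarrow> 'a list. (\<forall>j. w j \<in> lang X \<and> length (w j) \<ge> N) \<Longrightarrow>
      \<exists>x'\<in>X. dbar (inf_concat w) x' < ereal e"
    using assms(2) unfolding dbar_shadowing_def by blast
  have "dbar_H (markov_approx X n) X \<le> ereal e" if "n \<ge> N" for n
  proof (rule dbar_H_le_of_subset[OF subset_markov_approx])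
    fix a assume "a \<in> markov_approx X n"
    then show "\<exists>x'\<in>X. dbar a x' \<le> ereal e"
      using markov_approx_shadowed[OF shadow \<open>n \<ge> N\<close>] by (blast intro: less_imp_le)
  qed (use \<open>e > 0\<close> in simp)
  then show "eventually (\<lambda>n. dbar_H (markov_approx X n) X \<le> ereal e) sequentially"
    unfolding eventually_sequentially by blast
qed

end
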